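(* Let $x\in\mathbb{R}^p$ have $\mathbb{E}[x]=0$, covariance $\Sigma$ and bounded fourth moments with constant $C_4$. Let $\Phi:\mathbb{R}\to\mathbb{R}$ be four times differentiable and $c(\sigma)>0$, and let $y$ be real-valued with, conditionally on $x$ and writing $\eta^*=\langle x,\theta^*\rangle$, $\mathbb{E}[y\mid x]=\Phi'(\eta^* )$ and $\mathbb{E}[(y-\Phi'(\eta^* ))^4\mid x]=c(\sigma)^3\Phi^{(4)}(\eta^* )+3c(\sigma)^2(\Phi''(\eta^* ))^2$ (as holds when $y\mid x$ has density proportional to $\exp((y\eta^*-\Phi(\eta^* ))/c(\sigma))$ with respect to a base measure). Assume there are constants $L_{\Phi,2k},B_{\Phi,2k}\ge0$ ($k=1,2$) with $\mathbb{E}_x|\Phi'(\langle x,\theta\rangle)-\Phi'(\langle x,\theta^*\rangle)|^{2k}\le L_{\Phi,2k}\|\theta-\theta^*\|_2^{2k}+B_{\Phi,2k}$ for all $\theta$, and constants $M_{\Phi,2,2},M_{\Phi,4,1}$ with $\mathbb{E}_x[|\Phi''(\eta^* )|^2]\le M_{\Phi,2,2}$, $\mathbb{E}_x[|\Phi^{(4)}(\eta^* )|]\le M_{\Phi,4,1}$. Let $\overline{\mathcal{L}}(\theta;(x,y))=-y\langle x,\theta\rangle+\Phi(\langle x,\theta\rangle)$ and $\Delta=\theta-\theta^*$. Then there are constants $C_1,C_2>0$ depending only on $C_4$ such that for all $\theta\in\mathbb{R}^p$, $$\|\operatorname{Cov}(\nabla_\theta\overline{\mathcal{L}}(\theta;(x,y)))\|_2\le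 C_1\|\Delta\|_2^2\|\Sigma\|_2\big(\sqrt{L_{\Phi,4}}+L_{\Phi,2}\big)+C_2\|\Sigma\|_2\Big(B_{\Phi,2}+\sqrt{B_{\Phi,4}}+c(\sigma)\sqrt{3M_{\Phi,2,2}}+\sqrt{c(\sigma)^3M_{\Phi,4,1}}\Big).$$
   Context: A random vector $x$ with mean $\mu$ has bounded $2k$-th moments with constant $C_{2k}$ if for every unit vector $v$, $\mathbb{E}[\langle x-\mu,v\rangle^{2k}]\le C_{2k}(\mathbb{E}[\langle x-\mu,v\rangle^2])^k$. Matrix norm $\|\cdot\|_2$ is the operator norm. *)

theory Defs
  imports "HOL-Probability.Probability"
begin

text \<open>Vectors of R^p are represented as functions nat => real of which only the
coordinates i < p matter. The joint law of (x,y) is a probability measure on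
(nat => real) x real; x = fst, y = snd.\<close>

definition ipv :: "nat \<Rightarrow> (nat \<Rightarrow> real) \<Rightarrow> (nat \<Rightarrow> real) \<Rightarrow> real" where
  "ipv p u v = (\<Sum>i<p. u i * v i)"

definition vnorm :: "nat \<Rightarrow> (nat \<Rightarrow> real) \<Rightarrow> real" where
  "vnorm p v = sqrt (ipv p v v)"

definition opnorm :: "nat \<Rightarrow> (nat \<Rightarrow> nat \<Rightarrow> real) \<Rightarrow> real" where
  "opnorm p A = Sup {vnorm p (\<lambda>i. \<Sum>j<p. A i j * v j) | v. vnorm p v \<le> 1}"

definition mean_vec :: "'a measure \<Rightarrow> ('a \<Rightarrow> nat \<Rightarrow> real) \<Rightarrow> nat \<Rightarrow> real" where
  "mean_vec M X = (\<lambda>i. \<integral>z. X z i \<partial>M)"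

definition cov_matrix :: "'a measure \<Rightarrow> ('a \<Rightarrow> nat \<Rightarrow> real) \<Rightarrow> nat \<Rightarrow> nat \<Rightarrow> real" where
  "cov_matrix M X = (\<lambda>i j. \<integral>z. (X z i - mean_vec M X i) * (X z j - mean_vec M X j) \<partial>M)"

definition bounded_moments ::
  "'a measure \<Rightarrow> nat \<Rightarrow> ('a \<Rightarrow> nat \<Rightarrow> real) \<Rightarrow> nat \<Rightarrow> real \<Rightarrow> bool" where
  "bounded_moments M p X k C \<longleftrightarrow>
     (\<forall>v. vnorm p v = 1 \<longrightarrow>
        (\<integral>z. (ipv p (\<lambda>i. X z i - mean_vec M X i) v) ^ (2*k) \<partial>M)
          \<le> C * (\<integral>z. (ipv p (\<lambda>i. X z i - mean_vec M X i) v) ^ 2 \<partial>M) ^ k)"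

definition Lbar :: "nat \<Rightarrow> (real \<Rightarrow> real) \<Rightarrow> (nat \<Rightarrow> real) \<Rightarrow> (nat \<Rightarrow> real) \<times> real \<Rightarrow> real" where
  "Lbar p \<Phi> \<theta> z = - snd z * ipv p (fst z) \<theta> + \<Phi> (ipv p (fst z) \<theta>)"

definition grad_Lbar :: "nat \<Rightarrow> (real \<Rightarrow> real) \<Rightarrow> (nat \<Rightarrow> real) \<Rightarrow> (nat \<Rightarrow> real) \<times> real \<Rightarrow> nat \<Rightarrow> real" where
  "grad_Lbar p \<Phi> \<theta> z = (\<lambda>i. deriv (\<lambda>t. Lbar p \<Phi> (\<theta>(i := t)) z) (\<theta> i))"

definition sigma_x :: "nat \<Rightarrow> ((nat \<Rightarrow> real) \<times> real) measure \<Rightarrow> ((nat \<Rightarrow> real) \<times> real) measure" where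
  "sigma_x p M = vimage_algebra (space M) fst (PiM {..<p} (\<lambda>_. borel))"

definition glm_hyps ::
  "nat \<Rightarrow> ((nat \<Rightarrow> real) \<times> real) measure \<Rightarrow> real \<Rightarrow>
   (real \<Rightarrow> real) \<Rightarrow> (real \<Rightarrow> real) \<Rightarrow> (real \<Rightarrow> real) \<Rightarrow> (real \<Rightarrow> real) \<Rightarrow> (real \<Rightarrow> real) \<Rightarrow>
   (nat \<Rightarrow> real) \<Rightarrow> real \<Rightarrow> real \<Rightarrow> real \<Rightarrow> real \<Rightarrow> real \<Rightarrow> real \<Rightarrow> real \<Rightarrow> bool" where
  "glm_hyps p M C4 \<Phi> \<Phi>1 \<Phi>2 \<Phi>3 \<Phi>4 \<theta>s c L2 L4 B2 B4 M22 M41 \<longleftrightarrow>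
     prob_space M \<and>
     sets M = sets (PiM {..<p} (\<lambda>_. borel) \<Otimes>\<^sub>M (borel :: real measure)) \<and>
     \<comment> \<open>x has finite fourth moments, mean zero, bounded fourth moments with constant C4\<close>
     (\<forall>i<p. integrable M (\<lambda>z. fst z i ^ 4)) \<and>
     (\<forall>i<p. (\<integral>z. fst z i \<partial>M) = 0) \<and>
     bounded_moments M p fst 2 C4 \<and>
     \<comment> \<open>Phi four times differentiable\<close>
     (\<forall>t. (\<Phi> has_real_derivative \<Phi>1 t) (at t)) \<and>
     (\<forall>t. (\<Phi>1 has_real_derivative \<Phi>2 t) (at t)) \<and>
     (\<forall>t. (\<Phi>2 has_real_derivative \<Phi>3 t) (at t)) \<and>
     (\<forall>t. (\<Phi>3 has_real_derivative \<Phi>4 t) (at t)) \<and>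
     c > 0 \<and>
     \<comment> \<open>conditional moments of y given x\<close>
     integrable M snd \<and>
     (AE z in M. real_cond_exp M (sigma_x p M) snd z = \<Phi>1 (ipv p (fst z) \<theta>s)) \<and>
     integrable M (\<lambda>z. (snd z - \<Phi>1 (ipv p (fst z) \<theta>s)) ^ 4) \<and>
     (AE z in M. real_cond_exp M (sigma_x p M) (\<lambda>z. (snd z - \<Phi>1 (ipv p (fst z) \<theta>s)) ^ 4) z
                 = c ^ 3 * \<Phi>4 (ipv p (fst z) \<theta>s) + 3 * c\<^sup>2 * (\<Phi>2 (ipv p (fst z) \<theta>s))\<^sup>2) \<and>
     \<comment> \<open>Lipschitz-type moment conditions on Phi'\<close>
     L2 \<ge> 0 \<and> L4 \<ge> 0 \<and> B2 \<ge> 0 \<and> B4 \<ge> 0 \<and>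
     (\<forall>\<theta>. integrable M (\<lambda>z. \<bar>\<Phi>1 (ipv p (fst z) \<theta>) - \<Phi>1 (ipv p (fst z) \<theta>s)\<bar> ^ 2) \<and>
          (\<integral>z. \<bar>\<Phi>1 (ipv p (fst z) \<theta>) - \<Phi>1 (ipv p (fst z) \<theta>s)\<bar> ^ 2 \<partial>M)
            \<le> L2 * vnorm p (\<lambda>i. \<theta> i - \<theta>s i) ^ 2 + B2) \<and>
     (\<forall>\<theta>. integrable M (\<lambda>z. \<bar>\<Phi>1 (ipv p (fst z) \<theta>) - \<Phi>1 (ipv p (fst z) \<theta>s)\<bar> ^ 4) \<and>
          (\<integral>z. \<bar>\<Phi>1 (ipv p (fst z) \<theta>) - \<Phi>1 (ipv p (fst z) \<theta>s)\<bar> ^ 4 \<partial>M)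
            \<le> L4 * vnorm p (\<lambda>i. \<theta> i - \<theta>s i) ^ 4 + B4) \<and>
     integrable M (\<lambda>z. \<bar>\<Phi>2 (ipv p (fst z) \<theta>s)\<bar> ^ 2) \<and>
     (\<integral>z. \<bar>\<Phi>2 (ipv p (fst z) \<theta>s)\<bar> ^ 2 \<partial>M) \<le> M22 \<and>
     integrable M (\<lambda>z. \<bar>\<Phi>4 (ipv p (fst z) \<theta>s)\<bar>) \<and>
     (\<integral>z. \<bar>\<Phi>4 (ipv p (fst z) \<theta>s)\<bar> \<partial>M) \<le> M41"

end

theory Submission
  imports Defs
begin

text \<open>The i-th gradient component is (Phi'(<x,theta>) - y) x_i = (a - b) x_i with
a = Phi'(<x,theta>) - Phi'(<x,theta*>) and b = y - Phi'(<x,theta*>). A covariance matrix is dominated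
by the second moment matrix, so it suffices to bound E[((a - b) <x,v>)^2] by a multiple of |v|^2.
Using (a - b)^2 <= 2 a^2 + 2 b^2 and Cauchy-Schwarz, this is at most
2 (sqrt E[a^4] + sqrt E[b^4]) sqrt E[<x,v>^4]. Bounded fourth moments give
sqrt E[<x,v>^4] <= sqrt C4 E[<x,v>^2] <= sqrt C4 |Sigma| |v|^2; the moment condition on Phi' gives
sqrt E[a^4] <= sqrt L4 |Delta|^2 + sqrt B4; and by the tower property
E[b^4] = E[E[b^4 | x]] <= c^3 M41 + 3 c^2 M22.\<close>

section \<open>Cauchy-Schwarz and integrability of products\<close>

lemma le_sqrt_mult_of_am_gm:
  fixes P A B :: real
  assumes "A \<ge> 0" "B \<ge> 0" and am_gm: "\<And>s. s > 0 \<Longrightarrow> P \<le> (s * A + B / s) / 2"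
  shows "P \<le> sqrt A * sqrt B"
proof (cases "A > 0 \<and> B > 0")
  case True
  then have "P \<le> ((sqrt B / sqrt A) * A + B / (sqrt B / sqrt A)) / 2"
    by (intro am_gm) simp
  also have "\<dots> = sqrt A * sqrt B"
    using True by (simp add: field_simps)
  finally show ?thesis .
next
  case False
  then have "A * B = 0" using assms(1,2) by auto
  have "P \<le> e" if "e > 0" for e
  proof (cases "A = 0")
    case True
    have "P * (2 * (1 + B)) \<le> e * B"
      using am_gm[of "(B + 1) / e"] True that assms(2) by (simp add: field_simps)
    also have "\<dots> \<le> e * (2 * (1 + B))" using that assms(2) by (intro mult_left_mono) auto
    finally show ?thesis using assms(2) by (simp add: mult_le_cancel_right_pos)
  next
    case False
    then have "B = 0" using \<open>A * B = 0\<close> by simp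
    then show ?thesis using am_gm[of "e / A"] that assms(1) False by simp
  qed
  then have "P \<le> 0" using field_le_epsilon[of P 0] by simp
  with assms(1,2) show ?thesis by (meson mult_nonneg_nonneg order_trans real_sqrt_ge_zero)
qed

lemma integrable_mult_of_power2:
  fixes f g :: "'a \<Rightarrow> real"
  assumes [measurable]: "f \<in> borel_measurable M" "g \<in> borel_measurable M"
    and "integrable M (\<lambda>z. f z ^ 2)" "integrable M (\<lambda>z. g z ^ 2)"
  shows "integrable M (\<lambda>z. f z * g z)"
proof (rule Bochner_Integration.integrable_bound)
  show "integrable M (\<lambda>z. f z ^ 2 + g z ^ 2)" using assms by simp
  have "\<bar>a * b\<bar> \<le> a\<^sup>2 + b\<^sup>2" for a b :: real
  proof -
    have "2 * \<bar>a\<bar> * \<bar>b\<bar> \<le> a\<^sup>2 + b\<^sup>2"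
      using sum_squares_bound[of "\<bar>a\<bar>" "\<bar>b\<bar>"] by simp
    moreover have "0 \<le> \<bar>a\<bar> * \<bar>b\<bar>" by simp
    ultimately show ?thesis unfolding abs_mult by linarith
  qed
  then show "AE z in M. norm (f z * g z) \<le> norm (f z ^ 2 + g z ^ 2)"
    by simp
qed simp

lemma integrable_sum_power2:
  fixes f :: "'i \<Rightarrow> 'a \<Rightarrow> real"
  assumes [measurable]: "\<And>i. i \<in> I \<Longrightarrow> f i \<in> borel_measurable M"
    and "\<And>i. i \<in> I \<Longrightarrow> integrable M (\<lambda>z. f i z ^ 2)"
  shows "integrable M (\<lambda>z. (\<Sum>i\<in>I. f i z) ^ 2)"
proof (rule Bochner_Integration.integrable_bound)
  show "integrable M (\<lambda>z. (\<Sum>i\<in>I. f i z ^ 2) * card I)" using assms by simp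
  show "AE z in M. norm ((\<Sum>i\<in>I. f i z) ^ 2) \<le> norm ((\<Sum>i\<in>I. f i z ^ 2) * card I)"
    by (intro AE_I2) (simp add: sum_nonneg sum_squared_le_sum_of_squares)
qed simp

lemma integrable_sum_power4:
  fixes f :: "'i \<Rightarrow> 'a \<Rightarrow> real"
  assumes [measurable]: "\<And>i. i \<in> I \<Longrightarrow> f i \<in> borel_measurable M"
    and "\<And>i. i \<in> I \<Longrightarrow> integrable M (\<lambda>z. f i z ^ 4)"
  shows "integrable M (\<lambda>z. (\<Sum>i\<in>I. f i z) ^ 4)"
proof (rule Bochner_Integration.integrable_bound)
  have "integrable M (\<lambda>z. (\<Sum>i\<in>I. f i z ^ 2) ^ 2)"
    using assms by (intro integrable_sum_power2) (auto simp flip: power_mult)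
  then show "integrable M (\<lambda>z. (\<Sum>i\<in>I. f i z ^ 2) ^ 2 * card I ^ 2)" by simp
  have "(\<Sum>i\<in>I. f i z) ^ 4 \<le> (\<Sum>i\<in>I. f i z ^ 2) ^ 2 * card I ^ 2" for z
  proof -
    have "(\<Sum>i\<in>I. f i z) ^ 4 = ((\<Sum>i\<in>I. f i z) ^ 2) ^ 2" by simp
    also have "\<dots> \<le> ((\<Sum>i\<in>I. f i z ^ 2) * card I) ^ 2"
      by (intro power_mono sum_squared_le_sum_of_squares) simp
    finally show ?thesis by (simp add: power_mult_distrib)
  qed
  then show "AE z in M. norm ((\<Sum>i\<in>I. f i z) ^ 4) \<le> norm ((\<Sum>i\<in>I. f i z ^ 2) ^ 2 * card I ^ 2)"
    by (simp add: zero_le_even_power)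
qed simp

lemma integral_mult_le_sqrt_mult:
  fixes f g :: "'a \<Rightarrow> real"
  assumes [measurable]: "f \<in> borel_measurable M" "g \<in> borel_measurable M"
    and f2: "integrable M (\<lambda>z. f z ^ 2)" and g2: "integrable M (\<lambda>z. g z ^ 2)"
  shows "(\<integral>z. f z * g z \<partial>M) \<le> sqrt (\<integral>z. f z ^ 2 \<partial>M) * sqrt (\<integral>z. g z ^ 2 \<partial>M)"
proof (rule le_sqrt_mult_of_am_gm)
  fix s :: real assume s: "s > 0"
  have "(\<integral>z. f z * g z \<partial>M) \<le> (\<integral>z. (s * f z ^ 2 + g z ^ 2 / s) / 2 \<partial>M)"
  proof (rule integral_mono)
    show "integrable M (\<lambda>z. f z * g z)" by (rule integrable_mult_of_power2) (use assms in auto)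
    show "integrable M (\<lambda>z. (s * f z ^ 2 + g z ^ 2 / s) / 2)" using f2 g2 by simp
    fix z
    have "0 \<le> (s * f z - g z)^2 / s" using s by simp
    also have "\<dots> = s * f z ^ 2 - 2 * f z * g z + g z ^ 2 / s"
      using s by (simp add: power2_eq_square field_simps)
    finally show "f z * g z \<le> (s * f z ^ 2 + g z ^ 2 / s) / 2" by simp
  qed
  also have "\<dots> = (s * (\<integral>z. f z ^ 2 \<partial>M) + (\<integral>z. g z ^ 2 \<partial>M) / s) / 2"
    using f2 g2 by simp
  finally show "(\<integral>z. f z * g z \<partial>M) \<le> (s * (\<integral>z. f z ^ 2 \<partial>M) + (\<integral>z. g z ^ 2 \<partial>M) / s) / 2" .
qed simp_all

lemma integrable_mult_power2_of_power4:
  fixes f g :: "'a \<Rightarrow> real"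
  assumes "f \<in> borel_measurable M" "g \<in> borel_measurable M"
    and "integrable M (\<lambda>z. f z ^ 4)" "integrable M (\<lambda>z. g z ^ 4)"
  shows "integrable M (\<lambda>z. (f z * g z) ^ 2)"
  unfolding power_mult_distrib using assms
  by (intro integrable_mult_of_power2) (simp_all flip: power_mult)

lemma integral_mult_power2_le:
  fixes f g :: "'a \<Rightarrow> real"
  assumes "f \<in> borel_measurable M" "g \<in> borel_measurable M"
    and "integrable M (\<lambda>z. f z ^ 4)" "integrable M (\<lambda>z. g z ^ 4)"
  shows "(\<integral>z. (f z * g z) ^ 2 \<partial>M) \<le> sqrt (\<integral>z. f z ^ 4 \<partial>M) * sqrt (\<integral>z. g z ^ 4 \<partial>M)"
  using integral_mult_le_sqrt_mult[of "\<lambda>z. f z ^ 2" M "\<lambda>z. g z ^ 2"] assms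
  by (simp add: power_mult_distrib flip: power_mult)

lemma power2_diff_le: "((a::real) - b) ^ 2 \<le> 2 * a ^ 2 + 2 * b ^ 2"
proof -
  have "0 \<le> (a + b) ^ 2" by simp
  then show ?thesis by (simp add: power2_eq_square algebra_simps)
qed

lemma integrable_diff_mult_power2:
  fixes f g h :: "'a \<Rightarrow> real"
  assumes "f \<in> borel_measurable M" "g \<in> borel_measurable M" "h \<in> borel_measurable M"
    and "integrable M (\<lambda>z. f z ^ 4)" "integrable M (\<lambda>z. g z ^ 4)" "integrable M (\<lambda>z. h z ^ 4)"
  shows "integrable M (\<lambda>z. ((f z - g z) * h z) ^ 2)"
proof (rule Bochner_Integration.integrable_bound)
  show "integrable M (\<lambda>z. 2 * (f z * h z) ^ 2 + 2 * (g z * h z) ^ 2)"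
    using assms by (simp add: integrable_mult_power2_of_power4)
  show "AE z in M. norm (((f z - g z) * h z) ^ 2) \<le> norm (2 * (f z * h z) ^ 2 + 2 * (g z * h z) ^ 2)"
    using power2_diff_le by (intro AE_I2) (simp add: left_diff_distrib)
qed (use assms in measurable)

lemma integral_diff_mult_power2_le:
  fixes f g h :: "'a \<Rightarrow> real"
  assumes "f \<in> borel_measurable M" "g \<in> borel_measurable M" "h \<in> borel_measurable M"
    and f4: "integrable M (\<lambda>z. f z ^ 4)" and g4: "integrable M (\<lambda>z. g z ^ 4)"
    and h4: "integrable M (\<lambda>z. h z ^ 4)"
  shows "(\<integral>z. ((f z - g z) * h z) ^ 2 \<partial>M)
           \<le> 2 * (sqrt (\<integral>z. f z ^ 4 \<partial>M) + sqrt (\<integral>z. g z ^ 4 \<partial>M)) * sqrt (\<integral>z. h z ^ 4 \<partial>M)"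
proof -
  have fh: "integrable M (\<lambda>z. (f z * h z) ^ 2)" and gh: "integrable M (\<lambda>z. (g z * h z) ^ 2)"
    using assms by (simp_all add: integrable_mult_power2_of_power4)
  have "(\<integral>z. ((f z - g z) * h z) ^ 2 \<partial>M) \<le> (\<integral>z. 2 * (f z * h z) ^ 2 + 2 * (g z * h z) ^ 2 \<partial>M)"
    using fh gh integrable_diff_mult_power2[OF assms] power2_diff_le
    by (intro integral_mono) (simp_all add: left_diff_distrib)
  also have "\<dots> = 2 * (\<integral>z. (f z * h z) ^ 2 \<partial>M) + 2 * (\<integral>z. (g z * h z) ^ 2 \<partial>M)"
    using fh gh by simp
  also have "\<dots> \<le> 2 * (sqrt (\<integral>z. f z ^ 4 \<partial>M) * sqrt (\<integral>z. h z ^ 4 \<partial>M))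
                 + 2 * (sqrt (\<integral>z. g z ^ 4 \<partial>M) * sqrt (\<integral>z. h z ^ 4 \<partial>M))"
    using assms by (intro add_mono mult_left_mono integral_mult_power2_le) simp_all
  finally show ?thesis by (simp add: algebra_simps)
qed

section \<open>Vectors and the operator norm\<close>

lemma ipv_cong:
  "(\<And>i. i < p \<Longrightarrow> u i = u' i) \<Longrightarrow> (\<And>i. i < p \<Longrightarrow> v i = v' i) \<Longrightarrow> ipv p u v = ipv p u' v'"
  unfolding ipv_def by (rule sum.cong) auto

lemma ipv_scale_right: "ipv p u (\<lambda>i. c * v i) = c * ipv p u v"
  unfolding ipv_def by (simp add: sum_distrib_left algebra_simps)

lemma ipv_fun_upd:
  assumes "i < p"
  shows "ipv p x (\<theta>(i := t)) = ipv p x \<theta> + x i * (t - \<theta> i)"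
proof -
  have "(\<lambda>j. x j * (\<theta>(i := t)) j) = (\<lambda>j. x j * \<theta> j + (if j = i then x i * (t - \<theta> i) else 0))"
    by (auto simp: fun_eq_iff algebra_simps)
  then have "ipv p x (\<theta>(i := t)) = ipv p x \<theta> + (\<Sum>j<p. if j = i then x i * (t - \<theta> i) else 0)"
    unfolding ipv_def by (simp only: sum.distrib)
  then show ?thesis using assms by simp
qed

lemma ipv_fun_upd_outside: "\<not> i < p \<Longrightarrow> ipv p x (\<theta>(i := t)) = ipv p x \<theta>"
  by (rule ipv_cong) auto

lemma vnorm_nonneg: "0 \<le> vnorm p v"
  unfolding vnorm_def ipv_def by (simp add: sum_nonneg)

lemma vnorm_power2: "vnorm p v ^ 2 = ipv p v v"
  unfolding vnorm_def ipv_def by (simp add: sum_nonneg)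

lemma ipv_le_vnorm_mult: "ipv p u v \<le> vnorm p u * vnorm p v"
proof -
  have "(ipv p u v)^2 \<le> ipv p u u * ipv p v v"
    unfolding ipv_def using Cauchy_Schwarz_ineq_sum[of u v "{..<p}"] by (simp add: power2_eq_square)
  then show ?thesis
    unfolding vnorm_def by (metis real_sqrt_le_mono real_sqrt_mult real_sqrt_abs abs_ge_self order_trans)
qed

lemma vnorm_scale: "vnorm p (\<lambda>i. c * v i) = \<bar>c\<bar> * vnorm p v"
proof -
  have "ipv p (\<lambda>i. c * v i) (\<lambda>i. c * v i) = c\<^sup>2 * ipv p v v"
    unfolding ipv_def by (simp add: sum_distrib_left power2_eq_square algebra_simps)
  then show ?thesis unfolding vnorm_def by (simp add: real_sqrt_mult)
qed

lemma vnorm_normalize: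
  assumes "vnorm p v \<noteq> 0"
  shows "vnorm p (\<lambda>i. v i / vnorm p v) = 1"
  using vnorm_scale[of p "1 / vnorm p v" v] assms vnorm_nonneg[of p v] by simp

lemma abs_le_vnorm: "i < p \<Longrightarrow> \<bar>v i\<bar> \<le> vnorm p v"
  unfolding vnorm_def ipv_def
  by (rule real_le_rsqrt) (simp add: power2_eq_square, intro member_le_sum, auto)

lemma vnorm_eq_0_imp: "vnorm p v = 0 \<Longrightarrow> i < p \<Longrightarrow> v i = 0"
  using abs_le_vnorm[of i p v] by simp

definition mat_vec :: "nat \<Rightarrow> (nat \<Rightarrow> nat \<Rightarrow> real) \<Rightarrow> (nat \<Rightarrow> real) \<Rightarrow> nat \<Rightarrow> real" where
  "mat_vec p A v = (\<lambda>i. \<Sum>j<p. A i j * v j)"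

lemma mat_vec_scale: "mat_vec p A (\<lambda>j. c * v j) = (\<lambda>i. c * mat_vec p A v i)"
  unfolding mat_vec_def by (simp add: sum_distrib_left algebra_simps)

lemma bdd_above_vnorm_mat_vec: "bdd_above {vnorm p (mat_vec p A v) | v. vnorm p v \<le> 1}"
proof (rule bdd_aboveI)
  fix r assume "r \<in> {vnorm p (mat_vec p A v) | v. vnorm p v \<le> 1}"
  then obtain v where v: "vnorm p v \<le> 1" and r: "r = vnorm p (mat_vec p A v)" by auto
  have "\<bar>mat_vec p A v i\<bar> \<le> (\<Sum>j<p. \<bar>A i j\<bar>)" for i
  proof -
    have "\<bar>mat_vec p A v i\<bar> \<le> (\<Sum>j<p. \<bar>A i j\<bar> * \<bar>v j\<bar>)"
      unfolding mat_vec_def abs_mult[symmetric] by (rule sum_abs)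
    also have "\<dots> \<le> (\<Sum>j<p. \<bar>A i j\<bar>)"
    proof (intro sum_mono mult_left_le)
      fix j assume "j \<in> {..<p}"
      then show "\<bar>v j\<bar> \<le> 1" using abs_le_vnorm[of j p v] v by simp
    qed simp
    finally show ?thesis .
  qed
  then have "(mat_vec p A v i)\<^sup>2 \<le> (\<Sum>j<p. \<bar>A i j\<bar>)\<^sup>2" for i
    using abs_le_square_iff[of "mat_vec p A v i" "\<Sum>j<p. \<bar>A i j\<bar>"] by (simp add: sum_nonneg)
  then show "r \<le> sqrt (\<Sum>i<p. (\<Sum>j<p. \<bar>A i j\<bar>)\<^sup>2)"
    unfolding r vnorm_def ipv_def by (intro real_sqrt_le_mono sum_mono) (simp add: power2_eq_square)
qed

lemma opnorm_eq_Sup_mat_vec: "opnorm p A = Sup {vnorm p (mat_vec p A v) | v. vnorm p v \<le> 1}"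
  unfolding opnorm_def mat_vec_def ..

lemma vnorm_mat_vec_le_opnorm: "vnorm p v \<le> 1 \<Longrightarrow> vnorm p (mat_vec p A v) \<le> opnorm p A"
  unfolding opnorm_eq_Sup_mat_vec by (rule cSup_upper[OF _ bdd_above_vnorm_mat_vec]) auto

lemma opnorm_nonneg: "0 \<le> opnorm p A"
proof -
  have "vnorm p (mat_vec p A (\<lambda>_. 0)) \<le> opnorm p A"
    by (rule vnorm_mat_vec_le_opnorm) (simp add: vnorm_def ipv_def)
  then show ?thesis by (simp add: mat_vec_def vnorm_def ipv_def)
qed

lemma vnorm_mat_vec_le: "vnorm p (mat_vec p A v) \<le> opnorm p A * vnorm p v"
proof (cases "vnorm p v = 0")
  case True
  then have "vnorm p (mat_vec p A v) = 0"
    unfolding vnorm_def ipv_def mat_vec_def using vnorm_eq_0_imp[OF True] by simp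
  then show ?thesis using True by simp
next
  case False
  define n where "n = vnorm p v"
  have n: "n > 0" using False vnorm_nonneg[of p v] unfolding n_def by simp
  have "vnorm p (mat_vec p A (\<lambda>j. (1 / n) * v j)) \<le> opnorm p A"
    using vnorm_normalize[OF False] unfolding n_def
    by (intro vnorm_mat_vec_le_opnorm) simp
  then have "vnorm p (mat_vec p A v) / n \<le> opnorm p A"
    using n unfolding mat_vec_scale vnorm_scale by simp
  then show ?thesis using n unfolding n_def[symmetric] by (simp add: field_simps)
qed

lemma opnorm_le:
  assumes "\<And>v. vnorm p v \<le> 1 \<Longrightarrow> vnorm p (mat_vec p A v) \<le> K"
  shows "opnorm p A \<le> K"
  unfolding opnorm_eq_Sup_mat_vec
proof (rule cSup_least)
  have "vnorm p (\<lambda>_. 0) \<le> 1" by (simp add: vnorm_def ipv_def)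
  then show "{vnorm p (mat_vec p A v) |v. vnorm p v \<le> 1} \<noteq> {}" by blast
qed (use assms in auto)

section \<open>Covariance matrices and moments\<close>

lemma ipv_measurable:
  assumes "\<And>i. i < p \<Longrightarrow> (\<lambda>z. Y z i) \<in> borel_measurable M"
  shows "(\<lambda>z. ipv p (Y z) v) \<in> borel_measurable M"
  unfolding ipv_def using assms by (intro borel_measurable_sum) auto

lemma integrable_ipv_power2:
  assumes "\<And>i. i < p \<Longrightarrow> (\<lambda>z. Y z i) \<in> borel_measurable M"
    and "\<And>i. i < p \<Longrightarrow> integrable M (\<lambda>z. Y z i ^ 2)"
  shows "integrable M (\<lambda>z. ipv p (Y z) v ^ 2)"
  unfolding ipv_def using assms
  by (intro integrable_sum_power2) (auto simp: power_mult_distrib)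

lemma integrable_ipv_power4:
  assumes "\<And>i. i < p \<Longrightarrow> (\<lambda>z. Y z i) \<in> borel_measurable M"
    and "\<And>i. i < p \<Longrightarrow> integrable M (\<lambda>z. Y z i ^ 4)"
  shows "integrable M (\<lambda>z. ipv p (Y z) v ^ 4)"
  unfolding ipv_def using assms
  by (intro integrable_sum_power4) (auto simp: power_mult_distrib)

context prob_space
begin

lemma integrable_centered_power2:
  fixes f :: "'a \<Rightarrow> real"
  assumes "f \<in> borel_measurable M" "integrable M (\<lambda>z. f z ^ 2)"
  shows "integrable M (\<lambda>z. (f z - c) ^ 2)"
  using assms square_integrable_imp_integrable[OF assms] by (simp add: power2_diff)

lemma ipv_mat_vec_cov_matrix:
  assumes meas: "\<And>i. i < p \<Longrightarrow> (\<lambda>z. Y z i) \<in> borel_measurable M"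
    and sq: "\<And>i. i < p \<Longrightarrow> integrable M (\<lambda>z. Y z i ^ 2)"
  shows "ipv p w (mat_vec p (cov_matrix M Y) v)
     = (\<integral>z. ipv p (\<lambda>i. Y z i - mean_vec M Y i) w * ipv p (\<lambda>i. Y z i - mean_vec M Y i) v \<partial>M)"
proof -
  define D where "D = (\<lambda>z i. Y z i - mean_vec M Y i)"
  have Dm: "(\<lambda>z. D z i) \<in> borel_measurable M" if "i < p" for i
    unfolding D_def using meas[OF that] by measurable
  have Dij: "integrable M (\<lambda>z. D z i * D z j)" if "i < p" "j < p" for i j
    using that by (intro integrable_mult_of_power2 Dm) (auto simp: D_def meas sq integrable_centered_power2)
  have "(\<integral>z. ipv p (D z) w * ipv p (D z) v \<partial>M)
      = (\<integral>z. (\<Sum>i<p. \<Sum>j<p. w i * v j * (D z i * D z j)) \<partial>M)"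
    by (intro Bochner_Integration.integral_cong refl)
       (unfold ipv_def sum_product, intro sum.cong refl, simp add: algebra_simps)
  also have "\<dots> = (\<Sum>i<p. \<integral>z. (\<Sum>j<p. w i * v j * (D z i * D z j)) \<partial>M)"
    by (rule Bochner_Integration.integral_sum) (use Dij in auto)
  also have "\<dots> = (\<Sum>i<p. \<Sum>j<p. w i * v j * (\<integral>z. D z i * D z j \<partial>M))"
    by (intro sum.cong refl, subst Bochner_Integration.integral_sum) (use Dij in auto)
  also have "\<dots> = ipv p w (mat_vec p (cov_matrix M Y) v)"
    unfolding ipv_def mat_vec_def cov_matrix_def D_def
    by (simp add: sum_distrib_left algebra_simps)
  finally show ?thesis unfolding D_def by simp
qed

lemma integral_centered_ipv_power2_le:
  assumes meas: "\<And>i. i < p \<Longrightarrow> (\<lambda>z. Y z i) \<in> borel_measurable M"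
    and sq: "\<And>i. i < p \<Longrightarrow> integrable M (\<lambda>z. Y z i ^ 2)"
  shows "(\<integral>z. ipv p (\<lambda>i. Y z i - mean_vec M Y i) v ^ 2 \<partial>M) \<le> (\<integral>z. ipv p (Y z) v ^ 2 \<partial>M)"
proof -
  define X where "X = (\<lambda>z. ipv p (Y z) v)"
  have X2: "integrable M (\<lambda>z. X z ^ 2)"
    unfolding X_def by (rule integrable_ipv_power2[OF meas sq])
  have X1: "integrable M X"
    using ipv_measurable[OF meas, where v=v] X2 unfolding X_def by (rule square_integrable_imp_integrable)
  have Y1: "integrable M (\<lambda>z. Y z i)" if "i < p" for i
    using meas[OF that] sq[OF that] by (rule square_integrable_imp_integrable)
  have "expectation X = ipv p (mean_vec M Y) v"
    unfolding X_def ipv_def mean_vec_def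
    by (subst Bochner_Integration.integral_sum) (simp_all add: Y1)
  then have "ipv p (\<lambda>i. Y z i - mean_vec M Y i) v = X z - expectation X" for z
    by (simp add: X_def ipv_def sum_subtractf left_diff_distrib)
  then have "(\<integral>z. ipv p (\<lambda>i. Y z i - mean_vec M Y i) v ^ 2 \<partial>M) = variance X"
    by simp
  also have "\<dots> = expectation (\<lambda>z. X z ^ 2) - (expectation X)^2"
    by (rule variance_eq[OF X1 X2])
  also have "\<dots> \<le> expectation (\<lambda>z. X z ^ 2)" by simp
  finally show ?thesis unfolding X_def .
qed

lemma integral_centered_ipv_power2_le_opnorm:
  assumes meas: "\<And>i. i < p \<Longrightarrow> (\<lambda>z. Y z i) \<in> borel_measurable M"
    and sq: "\<And>i. i < p \<Longrightarrow> integrable M (\<lambda>z. Y z i ^ 2)"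
  shows "(\<integral>z. ipv p (\<lambda>i. Y z i - mean_vec M Y i) v ^ 2 \<partial>M) \<le> opnorm p (cov_matrix M Y) * vnorm p v ^ 2"
proof -
  have "(\<integral>z. ipv p (\<lambda>i. Y z i - mean_vec M Y i) v ^ 2 \<partial>M) = ipv p v (mat_vec p (cov_matrix M Y) v)"
    by (simp add: ipv_mat_vec_cov_matrix[OF meas sq] power2_eq_square)
  also have "\<dots> \<le> vnorm p v * vnorm p (mat_vec p (cov_matrix M Y) v)"
    by (rule ipv_le_vnorm_mult)
  also have "\<dots> \<le> vnorm p v * (opnorm p (cov_matrix M Y) * vnorm p v)"
    by (intro mult_left_mono vnorm_mat_vec_le vnorm_nonneg)
  finally show ?thesis by (simp add: power2_eq_square algebra_simps)
qed

lemma opnorm_cov_matrix_le: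
  assumes meas: "\<And>i. i < p \<Longrightarrow> (\<lambda>z. Y z i) \<in> borel_measurable M"
    and sq: "\<And>i. i < p \<Longrightarrow> integrable M (\<lambda>z. Y z i ^ 2)"
    and "K \<ge> 0"
    and second_moment: "\<And>v. (\<integral>z. ipv p (Y z) v ^ 2 \<partial>M) \<le> K * vnorm p v ^ 2"
  shows "opnorm p (cov_matrix M Y) \<le> K"
proof (rule opnorm_le)
  fix v :: "nat \<Rightarrow> real" assume v: "vnorm p v \<le> 1"
  define w where "w = mat_vec p (cov_matrix M Y) v"
  define D where "D = (\<lambda>z i. Y z i - mean_vec M Y i)"
  have Dm: "\<And>i. i < p \<Longrightarrow> (\<lambda>z. D z i) \<in> borel_measurable M"
    unfolding D_def using meas by measurable
  have D2: "\<And>i. i < p \<Longrightarrow> integrable M (\<lambda>z. D z i ^ 2)"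
    unfolding D_def using meas sq by (rule integrable_centered_power2)
  have centered: "(\<integral>z. ipv p (D z) u ^ 2 \<partial>M) \<le> K * vnorm p u ^ 2" for u
    using integral_centered_ipv_power2_le[where Y=Y and p=p and v=u, OF meas sq] second_moment[of u]
    unfolding D_def by linarith
  have "vnorm p w ^ 2 = (\<integral>z. ipv p (D z) w * ipv p (D z) v \<partial>M)"
    unfolding vnorm_power2 D_def by (simp add: w_def ipv_mat_vec_cov_matrix[OF meas sq])
  also have "\<dots> \<le> sqrt (\<integral>z. ipv p (D z) w ^ 2 \<partial>M) * sqrt (\<integral>z. ipv p (D z) v ^ 2 \<partial>M)"
    by (intro integral_mult_le_sqrt_mult integrable_ipv_power2 ipv_measurable) (simp_all add: Dm D2)
  also have "\<dots> \<le> sqrt (K * vnorm p w ^ 2) * sqrt (K * vnorm p v ^ 2)"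
    using \<open>K \<ge> 0\<close> by (intro mult_mono real_sqrt_le_mono centered) auto
  also have "\<dots> = K * vnorm p w * vnorm p v"
    using \<open>K \<ge> 0\<close> by (simp add: real_sqrt_mult vnorm_nonneg)
  also have "\<dots> \<le> K * vnorm p w"
    using \<open>K \<ge> 0\<close> v by (simp add: mult_left_le vnorm_nonneg)
  finally have "vnorm p w * vnorm p w \<le> K * vnorm p w"
    by (simp add: power2_eq_square)
  then show "vnorm p (mat_vec p (cov_matrix M Y) v) \<le> K"
    using \<open>K \<ge> 0\<close> vnorm_nonneg[of p w] unfolding w_def[symmetric]
    by (cases "vnorm p w = 0") (simp_all add: mult_le_cancel_right_pos)
qed

end

lemma bounded_momentsD:
  assumes "bounded_moments M p X k C" "k > 0"
  shows "(\<integral>z. ipv p (\<lambda>i. X z i - mean_vec M X i) v ^ (2 * k) \<partial>M)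
           \<le> C * (\<integral>z. ipv p (\<lambda>i. X z i - mean_vec M X i) v ^ 2 \<partial>M) ^ k"
proof (cases "vnorm p v = 0")
  case True
  have "ipv p u v = 0" for u
    using vnorm_eq_0_imp[OF True] unfolding ipv_def by simp
  then show ?thesis using \<open>k > 0\<close> by (simp add: zero_power)
next
  case False
  define n where "n = vnorm p v"
  define E where "E = (\<lambda>m. \<integral>z. ipv p (\<lambda>i. X z i - mean_vec M X i) v ^ m \<partial>M)"
  have n: "n > 0" using False vnorm_nonneg[of p v] unfolding n_def by simp
  have scaled: "(\<integral>z. ipv p (\<lambda>i. X z i - mean_vec M X i) (\<lambda>i. (1 / n) * v i) ^ m \<partial>M) = (1 / n) ^ m * E m" for m
    unfolding ipv_scale_right E_def power_mult_distrib by simp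
  have unit: "vnorm p (\<lambda>i. (1 / n) * v i) = 1"
    using vnorm_normalize[OF False] unfolding n_def by simp
  have "(1 / n) ^ (2 * k) * E (2 * k) \<le> C * ((1 / n) ^ 2 * E 2) ^ k"
    using assms(1) unit unfolding bounded_moments_def scaled[symmetric] by blast
  also have "\<dots> = (1 / n) ^ (2 * k) * (C * E 2 ^ k)"
    by (simp add: power_mult_distrib power_mult)
  finally show ?thesis using n unfolding E_def by (simp add: mult_le_cancel_left_pos)
qed

section \<open>The generalized linear model\<close>

lemma grad_Lbar_eq:
  assumes "\<And>t. (\<Phi> has_real_derivative \<Phi>1 t) (at t)"
  shows "grad_Lbar p \<Phi> \<theta> z i = (if i < p then (\<Phi>1 (ipv p (fst z) \<theta>) - snd z) * fst z i else 0)"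
proof (cases "i < p")
  case True
  define \<eta> where "\<eta> = ipv p (fst z) \<theta>"
  have Lbar_line: "(\<lambda>t. Lbar p \<Phi> (\<theta>(i := t)) z)
      = (\<lambda>t. - snd z * (\<eta> + fst z i * (t - \<theta> i)) + \<Phi> (\<eta> + fst z i * (t - \<theta> i)))"
    unfolding Lbar_def \<eta>_def using ipv_fun_upd[OF True] by simp
  have line: "((\<lambda>t. \<eta> + fst z i * (t - \<theta> i)) has_real_derivative fst z i) (at (\<theta> i))"
    by (auto intro!: derivative_eq_intros)
  have "((\<lambda>t. \<Phi> (\<eta> + fst z i * (t - \<theta> i))) has_real_derivative \<Phi>1 \<eta> * fst z i) (at (\<theta> i))"
    by (rule DERIV_chain2[OF _ line]) (simp add: assms)
  then have "((\<lambda>t. Lbar p \<Phi> (\<theta>(i := t)) z) has_real_derivative (\<Phi>1 \<eta> - snd z) * fst z i) (at (\<theta> i))"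
    unfolding Lbar_line using line by (auto intro!: derivative_eq_intros simp: algebra_simps)
  then show ?thesis
    using True unfolding grad_Lbar_def \<eta>_def by (simp add: DERIV_imp_deriv)
next
  case False
  then show ?thesis
    unfolding grad_Lbar_def Lbar_def by (simp add: ipv_fun_upd_outside)
qed

locale glm =
  fixes p :: nat and M :: "((nat \<Rightarrow> real) \<times> real) measure" and C4 :: real
    and \<Phi> \<Phi>1 \<Phi>2 \<Phi>3 \<Phi>4 :: "real \<Rightarrow> real" and \<theta>s :: "nat \<Rightarrow> real"
    and c L2 L4 B2 B4 M22 M41 :: real
  assumes glm_hyps: "glm_hyps p M C4 \<Phi> \<Phi>1 \<Phi>2 \<Phi>3 \<Phi>4 \<theta>s c L2 L4 B2 B4 M22 M41"
begin

lemma
  shows prob_space_M: "prob_space M"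
    and sets_M: "sets M = sets (PiM {..<p} (\<lambda>_. borel) \<Otimes>\<^sub>M (borel :: real measure))"
    and integrable_x_power4: "i < p \<Longrightarrow> integrable M (\<lambda>z. fst z i ^ 4)"
    and integral_x_eq_0: "i < p \<Longrightarrow> (\<integral>z. fst z i \<partial>M) = 0"
    and bounded_moments_x: "bounded_moments M p fst 2 C4"
    and Phi_deriv: "(\<Phi> has_real_derivative \<Phi>1 t) (at t)"
    and Phi1_deriv: "(\<Phi>1 has_real_derivative \<Phi>2 t) (at t)"
    and c_pos: "c > 0"
    and integrable_residual_power4: "integrable M (\<lambda>z. (snd z - \<Phi>1 (ipv p (fst z) \<theta>s)) ^ 4)"
    and cond_exp_residual_power4: "AE z in M. real_cond_exp M (sigma_x p M) (\<lambda>z. (snd z - \<Phi>1 (ipv p (fst z) \<theta>s)) ^ 4) z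
                 = c ^ 3 * \<Phi>4 (ipv p (fst z) \<theta>s) + 3 * c\<^sup>2 * (\<Phi>2 (ipv p (fst z) \<theta>s))\<^sup>2"
    and L2_nonneg: "L2 \<ge> 0" and L4_nonneg: "L4 \<ge> 0"
    and B2_nonneg: "B2 \<ge> 0" and B4_nonneg: "B4 \<ge> 0"
    and integrable_link_power4: "integrable M (\<lambda>z. \<bar>\<Phi>1 (ipv p (fst z) \<theta>) - \<Phi>1 (ipv p (fst z) \<theta>s)\<bar> ^ 4)"
    and integral_link_power4_le: "(\<integral>z. \<bar>\<Phi>1 (ipv p (fst z) \<theta>) - \<Phi>1 (ipv p (fst z) \<theta>s)\<bar> ^ 4 \<partial>M)
            \<le> L4 * vnorm p (\<lambda>i. \<theta> i - \<theta>s i) ^ 4 + B4"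
    and integrable_Phi2_power2: "integrable M (\<lambda>z. \<bar>\<Phi>2 (ipv p (fst z) \<theta>s)\<bar> ^ 2)"
    and integral_Phi2_power2_le: "(\<integral>z. \<bar>\<Phi>2 (ipv p (fst z) \<theta>s)\<bar> ^ 2 \<partial>M) \<le> M22"
    and integrable_Phi4: "integrable M (\<lambda>z. \<bar>\<Phi>4 (ipv p (fst z) \<theta>s)\<bar>)"
    and integral_Phi4_le: "(\<integral>z. \<bar>\<Phi>4 (ipv p (fst z) \<theta>s)\<bar> \<partial>M) \<le> M41"
  using glm_hyps unfolding glm_hyps_def by blast+

sublocale prob_space M
  by (rule prob_space_M)

lemma measurable_fst_M: "fst \<in> measurable M (PiM {..<p} (\<lambda>_. borel))"
  unfolding measurable_cong_sets[OF sets_M refl] by (rule measurable_fst)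

lemma measurable_snd_M: "snd \<in> borel_measurable M"
  unfolding measurable_cong_sets[OF sets_M refl] by (rule measurable_snd)

lemma measurable_x: "i < p \<Longrightarrow> (\<lambda>z. fst z i) \<in> borel_measurable M"
  using measurable_compose[OF measurable_fst_M measurable_component_singleton] by simp

lemma measurable_Phi1_ipv: "(\<lambda>z. \<Phi>1 (ipv p (fst z) \<theta>)) \<in> borel_measurable M"
proof -
  have "continuous_on UNIV \<Phi>1"
    using Phi1_deriv DERIV_isCont continuous_at_imp_continuous_on by blast
  then show ?thesis
    using measurable_compose[OF ipv_measurable[where Y=fst and p=p, OF measurable_x]
        borel_measurable_continuous_onI]
    by blast
qed

lemma integrable_x_power2: "i < p \<Longrightarrow> integrable M (\<lambda>z. fst z i ^ 2)"
  using square_integrable_imp_integrable[of "\<lambda>z. fst z i ^ 2"] measurable_x integrable_x_power4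
  by (simp flip: power_mult)

lemma ipv_centered_x: "ipv p (\<lambda>i. fst z i - mean_vec M fst i) v = ipv p (fst z) v"
  by (rule ipv_cong) (simp_all add: mean_vec_def integral_x_eq_0)

lemma integral_ipv_x_power2_le:
  "(\<integral>z. ipv p (fst z) v ^ 2 \<partial>M) \<le> opnorm p (cov_matrix M fst) * vnorm p v ^ 2"
  using integral_centered_ipv_power2_le_opnorm[where Y=fst and p=p, OF measurable_x integrable_x_power2]
  unfolding ipv_centered_x .

lemma sqrt_integral_ipv_x_power4_le:
  "sqrt (\<integral>z. ipv p (fst z) v ^ 4 \<partial>M) \<le> sqrt \<bar>C4\<bar> * (opnorm p (cov_matrix M fst) * vnorm p v ^ 2)"
proof -
  have "(\<integral>z. ipv p (fst z) v ^ 4 \<partial>M) \<le> C4 * (\<integral>z. ipv p (fst z) v ^ 2 \<partial>M) ^ 2"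
    using bounded_momentsD[OF bounded_moments_x, of v] unfolding ipv_centered_x by simp
  also have "\<dots> \<le> \<bar>C4\<bar> * (opnorm p (cov_matrix M fst) * vnorm p v ^ 2) ^ 2"
    by (intro mult_mono abs_ge_self power_mono integral_ipv_x_power2_le) simp_all
  finally have "sqrt (\<integral>z. ipv p (fst z) v ^ 4 \<partial>M)
      \<le> sqrt (\<bar>C4\<bar> * (opnorm p (cov_matrix M fst) * vnorm p v ^ 2) ^ 2)"
    by (rule real_sqrt_le_mono)
  also have "\<dots> = sqrt \<bar>C4\<bar> * (opnorm p (cov_matrix M fst) * vnorm p v ^ 2)"
    using opnorm_nonneg[of p "cov_matrix M fst"] by (simp add: real_sqrt_mult)
  finally show ?thesis .
qed

lemma subalgebra_sigma_x: "subalgebra M (sigma_x p M)"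
  unfolding subalgebra_def sigma_x_def
  using measurable_fst_M unfolding measurable_iff_sets by simp

lemma integral_residual_power4_le:
  "(\<integral>z. (snd z - \<Phi>1 (ipv p (fst z) \<theta>s)) ^ 4 \<partial>M) \<le> c ^ 3 * M41 + 3 * c\<^sup>2 * M22"
proof -
  interpret sigma_finite_subalgebra M "sigma_x p M"
    using subalgebra_sigma_x finite_measure_axioms
    by (intro finite_measure_subalgebra_is_sigma_finite)
       (simp add: finite_measure_subalgebra_def finite_measure_subalgebra_axioms_def)
  let ?b4 = "\<lambda>z. (snd z - \<Phi>1 (ipv p (fst z) \<theta>s)) ^ 4"
  let ?bound = "\<lambda>z. c ^ 3 * \<bar>\<Phi>4 (ipv p (fst z) \<theta>s)\<bar> + 3 * c\<^sup>2 * \<bar>\<Phi>2 (ipv p (fst z) \<theta>s)\<bar> ^ 2"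
  have "(\<integral>z. ?b4 z \<partial>M) = (\<integral>z. real_cond_exp M (sigma_x p M) ?b4 z \<partial>M)"
    using real_cond_exp_int(2)[OF integrable_residual_power4] by simp
  also have "\<dots> \<le> (\<integral>z. ?bound z \<partial>M)"
  proof (rule integral_mono_AE)
    show "integrable M (real_cond_exp M (sigma_x p M) ?b4)"
      by (rule real_cond_exp_int(1)[OF integrable_residual_power4])
    show "integrable M ?bound"
      using integrable_Phi2_power2 integrable_Phi4 by simp
    have abs_bound: "c ^ 3 * \<Phi>4 t \<le> c ^ 3 * \<bar>\<Phi>4 t\<bar>" for t
      using c_pos by (intro mult_left_mono) auto
    show "AE z in M. real_cond_exp M (sigma_x p M) ?b4 z \<le> ?bound z"
      using cond_exp_residual_power4
    proof eventually_elim
      case (elim z)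
      then show ?case using abs_bound[of "ipv p (fst z) \<theta>s"] by simp
    qed
  qed
  also have "\<dots> = c ^ 3 * (\<integral>z. \<bar>\<Phi>4 (ipv p (fst z) \<theta>s)\<bar> \<partial>M) + 3 * c\<^sup>2 * (\<integral>z. \<bar>\<Phi>2 (ipv p (fst z) \<theta>s)\<bar> ^ 2 \<partial>M)"
    using integrable_Phi2_power2 integrable_Phi4 by simp
  also have "\<dots> \<le> c ^ 3 * M41 + 3 * c\<^sup>2 * M22"
    using integral_Phi2_power2_le integral_Phi4_le c_pos by (intro add_mono mult_left_mono) auto
  finally show ?thesis .
qed

lemma M22_nonneg: "M22 \<ge> 0"
proof -
  have "0 \<le> (\<integral>z. \<bar>\<Phi>2 (ipv p (fst z) \<theta>s)\<bar> ^ 2 \<partial>M)"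
    by (intro Bochner_Integration.integral_nonneg) simp
  then show ?thesis using integral_Phi2_power2_le by linarith
qed

lemma M41_nonneg: "M41 \<ge> 0"
proof -
  have "0 \<le> (\<integral>z. \<bar>\<Phi>4 (ipv p (fst z) \<theta>s)\<bar> \<partial>M)"
    by (intro Bochner_Integration.integral_nonneg) simp
  then show ?thesis using integral_Phi4_le by linarith
qed

lemma sqrt_integral_residual_power4_le:
  "sqrt (\<integral>z. (snd z - \<Phi>1 (ipv p (fst z) \<theta>s)) ^ 4 \<partial>M) \<le> c * sqrt (3 * M22) + sqrt (c ^ 3 * M41)"
proof -
  have "sqrt (\<integral>z. (snd z - \<Phi>1 (ipv p (fst z) \<theta>s)) ^ 4 \<partial>M) \<le> sqrt (3 * c\<^sup>2 * M22 + c ^ 3 * M41)"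
    using integral_residual_power4_le by (simp add: add.commute)
  also have "\<dots> \<le> sqrt (3 * c\<^sup>2 * M22) + sqrt (c ^ 3 * M41)"
    using c_pos M22_nonneg M41_nonneg by (intro sqrt_add_le_add_sqrt) auto
  also have "sqrt (3 * c\<^sup>2 * M22) = c * sqrt (3 * M22)"
    using c_pos by (simp add: real_sqrt_mult)
  finally show ?thesis .
qed

lemma sqrt_integral_link_power4_le:
  "sqrt (\<integral>z. (\<Phi>1 (ipv p (fst z) \<theta>) - \<Phi>1 (ipv p (fst z) \<theta>s)) ^ 4 \<partial>M)
     \<le> sqrt L4 * vnorm p (\<lambda>i. \<theta> i - \<theta>s i) ^ 2 + sqrt B4"
proof -
  let ?\<Delta> = "vnorm p (\<lambda>i. \<theta> i - \<theta>s i)"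
  have "sqrt (\<integral>z. (\<Phi>1 (ipv p (fst z) \<theta>) - \<Phi>1 (ipv p (fst z) \<theta>s)) ^ 4 \<partial>M) \<le> sqrt (L4 * ?\<Delta> ^ 4 + B4)"
    using integral_link_power4_le[of \<theta>] by (simp add: power_even_abs)
  also have "\<dots> \<le> sqrt (L4 * ?\<Delta> ^ 4) + sqrt B4"
    using L4_nonneg B4_nonneg by (intro sqrt_add_le_add_sqrt) auto
  also have "sqrt (L4 * ?\<Delta> ^ 4) = sqrt L4 * ?\<Delta> ^ 2"
    using real_sqrt_abs[of "?\<Delta> ^ 2"] by (simp add: real_sqrt_mult flip: power_mult)
  finally show ?thesis .
qed

lemma opnorm_cov_grad_Lbar_le:
  "opnorm p (cov_matrix M (grad_Lbar p \<Phi> \<theta>))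
     \<le> 2 * sqrt \<bar>C4\<bar> * opnorm p (cov_matrix M fst) *
        ((sqrt L4 * vnorm p (\<lambda>i. \<theta> i - \<theta>s i) ^ 2 + sqrt B4) + (c * sqrt (3 * M22) + sqrt (c ^ 3 * M41)))"
  (is "_ \<le> 2 * sqrt \<bar>C4\<bar> * ?S * (?A + ?B)")
proof -
  define a where "a (z :: (nat \<Rightarrow> real) \<times> real) = \<Phi>1 (ipv p (fst z) \<theta>) - \<Phi>1 (ipv p (fst z) \<theta>s)" for z
  define b where "b (z :: (nat \<Rightarrow> real) \<times> real) = snd z - \<Phi>1 (ipv p (fst z) \<theta>s)" for z
  have grad: "grad_Lbar p \<Phi> \<theta> z i = (a z - b z) * fst z i" if "i < p" for z i
    using that by (simp add: grad_Lbar_eq[OF Phi_deriv] a_def b_def)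
  have [measurable]: "a \<in> borel_measurable M" "b \<in> borel_measurable M"
    unfolding a_def b_def using measurable_Phi1_ipv measurable_snd_M by measurable
  have a4: "integrable M (\<lambda>z. a z ^ 4)"
    using integrable_link_power4[of \<theta>] by (simp add: a_def power_even_abs)
  have b4: "integrable M (\<lambda>z. b z ^ 4)"
    using integrable_residual_power4 by (simp add: b_def)
  have x4: "integrable M (\<lambda>z. ipv p (fst z) v ^ 4)" for v
    by (rule integrable_ipv_power4[OF measurable_x integrable_x_power4])
  have "?S \<ge> 0" by (rule opnorm_nonneg)
  have "?A \<ge> 0" "?B \<ge> 0"
    using L4_nonneg B4_nonneg c_pos M22_nonneg M41_nonneg by auto
  show ?thesis
  proof (rule opnorm_cov_matrix_le)
    fix i assume "i < p"
    then show "(\<lambda>z. grad_Lbar p \<Phi> \<theta> z i) \<in> borel_measurable M"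
      and "integrable M (\<lambda>z. grad_Lbar p \<Phi> \<theta> z i ^ 2)"
      using measurable_x[of i] integrable_x_power4[of i] a4 b4
      by (simp_all add: grad integrable_diff_mult_power2)
  next
    fix v
    have "ipv p (grad_Lbar p \<Phi> \<theta> z) v = (a z - b z) * ipv p (fst z) v" for z
      unfolding ipv_def by (simp add: grad sum_distrib_left algebra_simps)
    then have "(\<integral>z. ipv p (grad_Lbar p \<Phi> \<theta> z) v ^ 2 \<partial>M) = (\<integral>z. ((a z - b z) * ipv p (fst z) v) ^ 2 \<partial>M)"
      by simp
    also have "\<dots> \<le> 2 * (sqrt (\<integral>z. a z ^ 4 \<partial>M) + sqrt (\<integral>z. b z ^ 4 \<partial>M)) * sqrt (\<integral>z. ipv p (fst z) v ^ 4 \<partial>M)"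
      using a4 b4 x4 ipv_measurable[where Y=fst and p=p, OF measurable_x]
      by (intro integral_diff_mult_power2_le) simp_all
    also have "\<dots> \<le> 2 * (?A + ?B) * (sqrt \<bar>C4\<bar> * (?S * vnorm p v ^ 2))"
      using \<open>?A \<ge> 0\<close> \<open>?B \<ge> 0\<close>
      by (intro mult_mono mult_left_mono add_mono sqrt_integral_ipv_x_power4_le)
         (simp_all add: a_def b_def sqrt_integral_link_power4_le sqrt_integral_residual_power4_le)
    finally show "(\<integral>z. ipv p (grad_Lbar p \<Phi> \<theta> z) v ^ 2 \<partial>M)
        \<le> 2 * sqrt \<bar>C4\<bar> * ?S * (?A + ?B) * vnorm p v ^ 2"
      by (simp add: algebra_simps)
  qed (use \<open>?S \<ge> 0\<close> \<open>?A \<ge> 0\<close> \<open>?B \<ge> 0\<close> in simp)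
qed

end

theorem mainTheorem5:
  fixes C4 :: real
  shows "\<exists>C1 C2. C1 > 0 \<and> C2 > 0 \<and>
    (\<forall>p M \<Phi> \<Phi>1 \<Phi>2 \<Phi>3 \<Phi>4 \<theta>s c L2 L4 B2 B4 M22 M41.
       glm_hyps p M C4 \<Phi> \<Phi>1 \<Phi>2 \<Phi>3 \<Phi>4 \<theta>s c L2 L4 B2 B4 M22 M41 \<longrightarrow>
       (\<forall>\<theta>. opnorm p (cov_matrix M (\<lambda>z. grad_Lbar p \<Phi> \<theta> z))
         \<le> C1 * vnorm p (\<lambda>i. \<theta> i - \<theta>s i) ^ 2 * opnorm p (cov_matrix M fst) * (sqrt L4 + L2)
           + C2 * opnorm p (cov_matrix M fst)
               * (B2 + sqrt B4 + c * sqrt (3 * M22) + sqrt (c ^ 3 * M41))))"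
proof -
  define C :: real where "C = 2 * sqrt \<bar>C4\<bar> + 1"
  have "C > 0" unfolding C_def by (simp add: add_nonneg_pos)
  moreover have "opnorm p (cov_matrix M (grad_Lbar p \<Phi> \<theta>))
         \<le> C * vnorm p (\<lambda>i. \<theta> i - \<theta>s i) ^ 2 * opnorm p (cov_matrix M fst) * (sqrt L4 + L2)
           + C * opnorm p (cov_matrix M fst) * (B2 + sqrt B4 + c * sqrt (3 * M22) + sqrt (c ^ 3 * M41))"
    if "glm_hyps p M C4 \<Phi> \<Phi>1 \<Phi>2 \<Phi>3 \<Phi>4 \<theta>s c L2 L4 B2 B4 M22 M41"
    for p M \<Phi> \<Phi>1 \<Phi>2 \<Phi>3 \<Phi>4 \<theta>s c L2 L4 B2 B4 M22 M41 \<theta>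
  proof -
    interpret glm p M C4 \<Phi> \<Phi>1 \<Phi>2 \<Phi>3 \<Phi>4 \<theta>s c L2 L4 B2 B4 M22 M41
      by unfold_locales (rule that)
    define S where "S = opnorm p (cov_matrix M fst)"
    define \<Delta> where "\<Delta> = vnorm p (\<lambda>i. \<theta> i - \<theta>s i)"
    define T where "T = sqrt L4 * \<Delta> ^ 2 + sqrt B4 + (c * sqrt (3 * M22) + sqrt (c ^ 3 * M41))"
    have "S \<ge> 0" "T \<ge> 0"
      unfolding S_def T_def using opnorm_nonneg L4_nonneg B4_nonneg c_pos M22_nonneg M41_nonneg by auto
    have "opnorm p (cov_matrix M (grad_Lbar p \<Phi> \<theta>)) \<le> 2 * sqrt \<bar>C4\<bar> * S * T"
      using opnorm_cov_grad_Lbar_le[of \<theta>] unfolding S_def \<Delta>_def T_def .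
    also have "\<dots> \<le> C * S * T + C * S * (\<Delta> ^ 2 * L2 + B2)"
      using \<open>S \<ge> 0\<close> \<open>T \<ge> 0\<close> \<open>C > 0\<close> L2_nonneg B2_nonneg
      by (intro add_increasing2 mult_right_mono mult_nonneg_nonneg) (auto simp: C_def)
    finally show ?thesis
      unfolding S_def \<Delta>_def T_def by (simp add: algebra_simps)
  qed
  ultimately show ?thesis by blast
qed

end
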